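(* Fix $1\le p<2$ and constants $C_0,C_1>0$. There are constants $\omega_0$ and $c>0$ such that for all integers $d\ge2$, $n\ge d^2$, every $\omega\ge\omega_0$ and every fixed $y\in\mathbb{R}^n$: (i) if $\Pi$ is an $R\times n$ CountSketch matrix with $R=\lceil C_0d^2\rceil$, then with probability at least $1-\exp(-c\,\omega d\log d)$, $\|\Pi(y_{1:d^2})\|_p\le(\omega d\log d)^{1-1/p}\|y\|_p$; (ii) if $2<B\le d$ and $\Pi$ is an $R\times n$ OSNAP matrix with $R=\lceil C_0Bd\log d\rceil$ rows and $s=\lceil C_1\log_B d\rceil\le R$ non-zeros per column, then with probability at least $1-\exp(-c\,\omega d\log d)$, $\|\Pi(y_{1:d^2})\|_p\le s^{1/p-1/2}(\omega d\log d)^{1-1/p}\|y\|_p$.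
   Context: For $u\in\mathbb{R}^n$ and $1\le a\le b\le n$, $u_{a:b}$ denotes the vector whose $i$-th coordinate equals $u_i$ if $i\in[a,b]$ and $0$ otherwise. An $R\times n$ CountSketch matrix: independently for each column $j$, a uniformly random row $h(j)\in[R]$ is chosen and $\Pi_{h(j),j}$ is a uniformly random sign in $\{-1,1\}$; all other entries are $0$. An $R\times n$ OSNAP matrix with $s$ non-zeros per column: independently for each column, $s$ distinct rows are chosen uniformly at random and those entries are independently set to $\pm s^{-1/2}$ with uniformly random sign; all other entries are $0$. $\|y\|_p=(\sum_i|y_i|^p)^{1/p}$. *)

theory Defs
  imports "HOL-Probability.Probability"
begin

text \<open>Conventions: rows are indexed by 0..<R, columns by 0..<n (0-based).
  A matrix is represented column-wise: M j i is the entry in row i, column j.\<close>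

definition mat_apply :: "nat \<Rightarrow> nat \<Rightarrow> (nat \<Rightarrow> nat \<Rightarrow> real) \<Rightarrow> (nat \<Rightarrow> real) \<Rightarrow> (nat \<Rightarrow> real)" where
  "mat_apply R n M u = (\<lambda>i. if i < R then (\<Sum>j<n. M j i * u j) else 0)"

definition lp_norm :: "real \<Rightarrow> nat \<Rightarrow> (nat \<Rightarrow> real) \<Rightarrow> real" where
  "lp_norm p m u = (\<Sum>i<m. \<bar>u i\<bar> powr p) powr (1 / p)"

text \<open>u_{a:b} with 1-based a=1, b=k: keep the first k coordinates (0-based indices < k).\<close>
definition restrict_first :: "nat \<Rightarrow> (nat \<Rightarrow> real) \<Rightarrow> (nat \<Rightarrow> real)" where
  "restrict_first k u = (\<lambda>i. if i < k then u i else 0)"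

definition countsketch_col :: "nat \<Rightarrow> (nat \<Rightarrow> real) pmf" where
  "countsketch_col R =
     do { h \<leftarrow> pmf_of_set {..<R};
          \<sigma> \<leftarrow> pmf_of_set {-1, 1::real};
          return_pmf (\<lambda>i. if i = h then \<sigma> else 0) }"

definition countsketch :: "nat \<Rightarrow> nat \<Rightarrow> (nat \<Rightarrow> nat \<Rightarrow> real) pmf" where
  "countsketch R n = Pi_pmf {..<n} (\<lambda>_. 0) (\<lambda>_. countsketch_col R)"

definition osnap_col :: "nat \<Rightarrow> nat \<Rightarrow> (nat \<Rightarrow> real) pmf" where
  "osnap_col R s =
     do { S \<leftarrow> pmf_of_set {S. S \<subseteq> {..<R} \<and> card S = s};
          \<sigma> \<leftarrow> Pi_pmf S 0 (\<lambda>_. pmf_of_set {-1, 1::real});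
          return_pmf (\<lambda>i. if i \<in> S then \<sigma> i / sqrt (real s) else 0) }"

definition osnap :: "nat \<Rightarrow> nat \<Rightarrow> nat \<Rightarrow> (nat \<Rightarrow> nat \<Rightarrow> real) pmf" where
  "osnap R s n = Pi_pmf {..<n} (\<lambda>_. 0) (\<lambda>_. osnap_col R s)"

end

theory Submission
  imports Defs "HOL-Analysis.Harmonic_Numbers"
begin

text \<open>
  Only the first \<open>m = d\<^sup>2\<close> columns of the sketch meet the restricted vector; put
  \<open>L = \<omega> d ln d\<close>. If every row has at most \<open>L\<close> non-zero entries among these columns,
  Jensen's inequality in each row gives \<open>\<parallel>\<Pi>x\<parallel>\<^sub>p\<^sup>p \<le> L\<^sup>p\<^sup>-\<^sup>1 \<Sum>\<^sub>j \<parallel>\<Pi>e\<^sub>j\<parallel>\<^sub>p\<^sup>p \<bar>x\<^sub>j\<bar>\<^sup>p\<close>, and each column has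
  \<open>\<parallel>\<Pi>e\<^sub>j\<parallel>\<^sub>p\<^sup>p\<close> equal to \<open>1\<close> (CountSketch) or \<open>s\<^sup>1\<^sup>-\<^sup>p\<^sup>/\<^sup>2\<close> (OSNAP). The columns are independent
  and hit a fixed row with probability at most \<open>q = 1/R\<close> resp. \<open>s/R\<close>, so a row meets
  \<open>K = \<lfloor>L\<rfloor> + 1\<close> of them with probability at most \<open>(m choose K) q\<^sup>K \<le> (e m q / K)\<^sup>K\<close>.
  The choice of \<open>\<omega>\<^sub>0\<close> makes \<open>27 m q \<le> L\<close>, so this is at most \<open>e\<^sup>-\<^sup>2\<^sup>K\<close>, and the union bound
  over \<open>R \<le> e\<^sup>L\<close> rows costs only a factor \<open>e\<^sup>K\<close>.
\<close>

lemma measure_bind_pmf_le: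
  fixes M :: "'a pmf" and N :: "'a \<Rightarrow> 'b pmf"
  assumes "\<And>h. h \<in> set_pmf M \<Longrightarrow> h \<notin> G \<Longrightarrow> set_pmf (N h) \<inter> X = {}"
  shows "measure_pmf.prob (bind_pmf M N) X \<le> measure_pmf.prob M G"
proof -
  have "emeasure (measure_pmf (bind_pmf M N)) X = (\<integral>\<^sup>+h. emeasure (N h) X \<partial>M)"
    by simp
  also have "\<dots> \<le> (\<integral>\<^sup>+h. indicator G h \<partial>M)"
  proof (rule nn_integral_mono_AE, rule AE_pmfI)
    fix h assume h: "h \<in> set_pmf M"
    show "emeasure (N h) X \<le> indicator G h"
    proof (cases "h \<in> G")
      case True
      then show ?thesis by (simp add: measure_pmf.emeasure_le_1)
    next
      case False
      then have "measure (measure_pmf (N h)) X = 0" using assms h measure_pmf_zero_iff by blast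
      then show ?thesis using False by (simp add: measure_pmf.emeasure_eq_measure)
    qed
  qed
  also have "\<dots> = emeasure (measure_pmf M) G" by simp
  finally show ?thesis by (simp add: measure_pmf.emeasure_eq_measure)
qed

lemma power_div_fact_le_exp:
  fixes x :: real
  assumes "0 \<le> x"
  shows "x ^ k / fact k \<le> exp x"
proof -
  have "summable (\<lambda>n. x ^ n /\<^sub>R fact n)" using exp_converges sums_summable by blast
  then have "(\<Sum>n\<in>{k}. x ^ n /\<^sub>R fact n) \<le> (\<Sum>n. x ^ n /\<^sub>R fact n)"
    by (rule sum_le_suminf) (use assms in auto)
  then show ?thesis by (simp add: exp_def divide_inverse mult.commute)
qed

lemma binomial_mult_power_le:
  fixes q :: real
  assumes "0 \<le> q" "K \<ge> 1"
  shows "real (m choose K) * q ^ K \<le> (exp 1 * real m * q / real K) ^ K"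
proof -
  have choose: "real (m choose K) * fact K \<le> real m ^ K"
    using binomial_fact_pow[of m K] by (metis of_nat_fact of_nat_le_iff of_nat_mult of_nat_power)
  have "real K ^ K / fact K \<le> exp (real K)" by (rule power_div_fact_le_exp) simp
  then have fact: "real K ^ K \<le> exp 1 ^ K * fact K"
    by (simp add: field_simps exp_of_nat_mult[symmetric] exp_of_nat2_mult)
  have "real (m choose K) * q ^ K * real K ^ K \<le> real (m choose K) * q ^ K * (exp 1 ^ K * fact K)"
    using fact assms by (intro mult_left_mono) auto
  also have "\<dots> = (real (m choose K) * fact K) * (q ^ K * exp 1 ^ K)" by (simp add: algebra_simps)
  also have "\<dots> \<le> real m ^ K * (q ^ K * exp 1 ^ K)"
    using choose assms by (intro mult_right_mono) auto
  finally have "real (m choose K) * q ^ K * real K ^ K \<le> (exp 1 * real m * q) ^ K"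
    by (simp add: power_mult_distrib algebra_simps)
  moreover have "real K ^ K > 0" using assms by simp
  ultimately show ?thesis by (simp add: power_divide field_simps)
qed

text \<open>The constant \<open>27\<close> is chosen so that \<open>(e/27)\<^sup>K \<le> e\<^sup>-\<^sup>2\<^sup>K\<close>, since \<open>e\<^sup>3 \<le> 27\<close>.\<close>

lemma union_binomial_tail_le:
  fixes q :: real
  assumes R: "real R \<le> exp (real K)" and K: "K \<ge> 1" and q: "0 \<le> q"
    and ratio: "27 * real m * q \<le> real K"
  shows "real R * (real (m choose K) * q ^ K) \<le> exp (- real K)"
proof -
  have e3: "exp 3 \<le> (27::real)"
  proof -
    have "exp (3::real) = exp 1 ^ 3" by (simp add: exp_of_nat_mult[symmetric])
    also have "\<dots> \<le> 3 ^ 3" by (intro power_mono exp_le) simp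
    finally show ?thesis by simp
  qed
  have "real (m choose K) * q ^ K \<le> (exp 1 * real m * q / real K) ^ K"
    by (rule binomial_mult_power_le[OF q K])
  also have "\<dots> \<le> exp (-2) ^ K"
  proof (rule power_mono)
    have "exp 1 * real m * q / real K \<le> exp 1 / 27"
      using ratio K by (simp add: field_simps)
    also have "\<dots> \<le> exp 1 / exp 3" using e3 by (intro divide_left_mono) auto
    also have "\<dots> = exp (-2)" by (simp add: exp_diff[symmetric])
    finally show "exp 1 * real m * q / real K \<le> exp (-2)" .
  qed (use q in simp)
  also have "\<dots> = exp (-2 * real K)" by (simp add: exp_of_nat_mult[symmetric] mult.commute)
  finally have "real (m choose K) * q ^ K \<le> exp (-2 * real K)" .
  then have "real R * (real (m choose K) * q ^ K) \<le> exp (real K) * exp (-2 * real K)"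
    using R q by (intro mult_mono) auto
  also have "\<dots> = exp (- real K)" by (simp add: exp_add[symmetric])
  finally show ?thesis .
qed

lemma sum_powr_le_card_powr_sum:
  fixes a :: "'a \<Rightarrow> real"
  assumes fin: "finite S" and nonneg: "\<And>j. j \<in> S \<Longrightarrow> 0 \<le> a j" and p: "1 \<le> p"
  shows "(\<Sum>j\<in>S. a j) powr p \<le> real (card S) powr (p - 1) * (\<Sum>j\<in>S. a j powr p)"
proof -
  \<comment> \<open>\<open>powr_convex\<close> only covers \<open>{0<..}\<close>, so the zero terms are dropped first.\<close>
  define S' where "S' = {j\<in>S. a j \<noteq> 0}"
  have S'S: "S' \<subseteq> S" and fin': "finite S'" using fin by (auto simp: S'_def)
  have pos: "a j > 0" if "j \<in> S'" for j using nonneg that by (force simp: S'_def)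
  have sum: "(\<Sum>j\<in>S. a j) = (\<Sum>j\<in>S'. a j)" and sum_powr: "(\<Sum>j\<in>S. a j powr p) = (\<Sum>j\<in>S'. a j powr p)"
    using fin by (auto intro!: sum.mono_neutral_right simp: S'_def)
  show ?thesis
  proof (cases "S' = {}")
    case True
    then show ?thesis using sum by (simp add: sum_nonneg)
  next
    case False
    define k where "k = real (card S')"
    have k: "k > 0" using False fin' by (simp add: k_def card_gt_0_iff)
    have "(\<Sum>j\<in>S'. (1/k) *\<^sub>R a j) powr p \<le> (\<Sum>j\<in>S'. (1/k) * a j powr p)"
      by (rule convex_on_sum[OF fin' False powr_convex[OF p]]) (use k pos in \<open>auto simp: k_def\<close>)
    then have "((\<Sum>j\<in>S'. a j) / k) powr p \<le> (\<Sum>j\<in>S'. a j powr p) / k"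
      by (simp add: sum_divide_distrib[symmetric] sum_distrib_left[symmetric] divide_inverse mult.commute)
    moreover have "((\<Sum>j\<in>S'. a j) / k) powr p = (\<Sum>j\<in>S'. a j) powr p / k powr p"
      using k pos by (auto intro!: powr_divide sum_nonneg simp: less_imp_le)
    ultimately have "(\<Sum>j\<in>S'. a j) powr p \<le> k powr p / k * (\<Sum>j\<in>S'. a j powr p)"
      using k by (simp add: divide_le_eq field_simps)
    also have "k powr p / k = k powr (p - 1)" using k by (simp add: powr_diff)
    also have "k powr (p - 1) \<le> real (card S) powr (p - 1)"
      using k p card_mono[OF fin S'S] by (intro powr_mono2) (auto simp: k_def)
    finally show ?thesis
      using sum sum_powr by (simp add: mult_right_mono sum_nonneg)
  qed
qed

lemma abs_sum_powr_le_card_nonzero: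
  fixes c :: "'a \<Rightarrow> real"
  assumes "finite A" "1 \<le> p"
  shows "\<bar>\<Sum>j\<in>A. c j\<bar> powr p \<le> real (card {j\<in>A. c j \<noteq> 0}) powr (p - 1) * (\<Sum>j\<in>A. \<bar>c j\<bar> powr p)"
proof -
  let ?S = "{j\<in>A. c j \<noteq> 0}"
  have "\<bar>\<Sum>j\<in>A. c j\<bar> = \<bar>\<Sum>j\<in>?S. c j\<bar>" using assms by (auto intro!: arg_cong[where f=abs] sum.mono_neutral_right)
  also have "\<dots> \<le> (\<Sum>j\<in>?S. \<bar>c j\<bar>)" by (rule sum_abs)
  finally have "\<bar>\<Sum>j\<in>A. c j\<bar> powr p \<le> (\<Sum>j\<in>?S. \<bar>c j\<bar>) powr p"
    using assms by (intro powr_mono2) auto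
  also have "\<dots> \<le> real (card ?S) powr (p - 1) * (\<Sum>j\<in>?S. \<bar>c j\<bar> powr p)"
    using assms by (intro sum_powr_le_card_powr_sum) auto
  also have "(\<Sum>j\<in>?S. \<bar>c j\<bar> powr p) = (\<Sum>j\<in>A. \<bar>c j\<bar> powr p)"
    using assms by (auto intro!: sum.mono_neutral_left)
  finally show ?thesis .
qed

lemma lp_norm_mat_apply_le:
  fixes M :: "nat \<Rightarrow> nat \<Rightarrow> real" and x :: "nat \<Rightarrow> real"
  assumes p: "1 \<le> p" and b: "0 \<le> b" and L: "0 \<le> L"
    and col: "\<And>j. j < n \<Longrightarrow> (\<Sum>r<R. \<bar>M j r\<bar> powr p) \<le> b"
    and row: "\<And>r. r < R \<Longrightarrow> real (card {j\<in>{..<n}. M j r * x j \<noteq> 0}) \<le> L"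
  shows "lp_norm p R (mat_apply R n M x) \<le> L powr (1 - 1/p) * b powr (1/p) * lp_norm p n x"
proof -
  have "(\<Sum>r<R. \<bar>mat_apply R n M x r\<bar> powr p) \<le> (\<Sum>r<R. L powr (p-1) * (\<Sum>j<n. \<bar>M j r * x j\<bar> powr p))"
  proof (rule sum_mono)
    fix r assume r: "r \<in> {..<R}"
    have "\<bar>mat_apply R n M x r\<bar> powr p
        \<le> real (card {j\<in>{..<n}. M j r * x j \<noteq> 0}) powr (p - 1) * (\<Sum>j<n. \<bar>M j r * x j\<bar> powr p)"
      using r abs_sum_powr_le_card_nonzero[of "{..<n}" p "\<lambda>j. M j r * x j"] p by (simp add: mat_apply_def)
    also have "\<dots> \<le> L powr (p-1) * (\<Sum>j<n. \<bar>M j r * x j\<bar> powr p)"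
      using r row[of r] p by (intro mult_right_mono powr_mono2 sum_nonneg) auto
    finally show "\<bar>mat_apply R n M x r\<bar> powr p \<le> L powr (p-1) * (\<Sum>j<n. \<bar>M j r * x j\<bar> powr p)" .
  qed
  also have "\<dots> = L powr (p-1) * (\<Sum>j<n. \<bar>x j\<bar> powr p * (\<Sum>r<R. \<bar>M j r\<bar> powr p))"
  proof -
    have "(\<Sum>r<R. \<Sum>j<n. \<bar>M j r * x j\<bar> powr p) = (\<Sum>j<n. \<bar>x j\<bar> powr p * (\<Sum>r<R. \<bar>M j r\<bar> powr p))"
      by (subst sum.swap) (simp add: sum_distrib_left abs_mult powr_mult mult.commute)
    then show ?thesis by (simp add: sum_distrib_left[symmetric])
  qed
  also have "\<dots> \<le> L powr (p-1) * (\<Sum>j<n. \<bar>x j\<bar> powr p * b)"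
    by (intro mult_left_mono sum_mono) (auto simp: col)
  finally have main: "(\<Sum>r<R. \<bar>mat_apply R n M x r\<bar> powr p) \<le> L powr (p-1) * b * (\<Sum>j<n. \<bar>x j\<bar> powr p)"
    by (simp add: sum_distrib_left[symmetric] mult.commute mult.left_commute)
  have "lp_norm p R (mat_apply R n M x) \<le> (L powr (p-1) * b * (\<Sum>j<n. \<bar>x j\<bar> powr p)) powr (1/p)"
    unfolding lp_norm_def using p main by (intro powr_mono2) (auto intro: sum_nonneg)
  also have "\<dots> = (L powr (p-1)) powr (1/p) * b powr (1/p) * (\<Sum>j<n. \<bar>x j\<bar> powr p) powr (1/p)"
    using L b by (simp add: powr_mult sum_nonneg)
  also have "(L powr (p-1)) powr (1/p) = L powr (1 - 1/p)"
    using p by (simp add: powr_powr diff_divide_distrib)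
  finally show ?thesis by (simp add: lp_norm_def)
qed

lemma prob_Pi_pmf_all_in_le:
  assumes A: "finite A" and T: "T \<subseteq> A" and E: "measure_pmf.prob Q E \<le> q"
  shows "measure_pmf.prob (Pi_pmf A dflt (\<lambda>_. Q)) {M. \<forall>j\<in>T. M j \<in> E} \<le> q ^ card T"
proof -
  define B where "B j = (if j \<in> T then E else UNIV)" for j
  have "{M. \<forall>j\<in>T. M j \<in> E} = Pi A B" using T by (auto simp: B_def Pi_def)
  then have "measure_pmf.prob (Pi_pmf A dflt (\<lambda>_. Q)) {M. \<forall>j\<in>T. M j \<in> E}
      = (\<Prod>j\<in>A. measure_pmf.prob Q (B j))"
    using A by (simp add: measure_Pi_pmf_Pi)
  also have "\<dots> = (\<Prod>j\<in>T. measure_pmf.prob Q E)"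
    using A T by (subst prod.mono_neutral_right[of A T]) (auto simp: B_def)
  also have "\<dots> \<le> q ^ card T"
    using E by (simp add: prod_mono order_trans[OF _ E] flip: prod_constant)
  finally show ?thesis .
qed

lemma prob_Pi_pmf_row_load_le:
  fixes Q :: "(nat \<Rightarrow> real) pmf"
  assumes mn: "m \<le> n" and q: "0 \<le> q" and hit: "\<And>r. r < R \<Longrightarrow> measure_pmf.prob Q {c. c r \<noteq> 0} \<le> q"
  shows "measure_pmf.prob (Pi_pmf {..<n} (\<lambda>_. 0) (\<lambda>_. Q))
           {M. \<exists>r<R. K \<le> card {j\<in>{..<m}. M j r \<noteq> 0}} \<le> real R * (real (m choose K) * q ^ K)"
proof -
  define P where "P = Pi_pmf {..<n} (\<lambda>_. 0::real) (\<lambda>_. Q)"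
  define Ts where "Ts = {T. T \<subseteq> {..<m} \<and> card T = K}"
  define E where "E r T = {M::nat\<Rightarrow>nat\<Rightarrow>real. \<forall>j\<in>T. M j r \<noteq> 0}" for r T
  have finTs: "finite Ts" unfolding Ts_def by (rule finite_subset[of _ "Pow {..<m}"]) auto
  have cardTs: "card Ts = m choose K" unfolding Ts_def using n_subsets[of "{..<m}" K] by simp
  have "{M. \<exists>r<R. K \<le> card {j\<in>{..<m}. M j r \<noteq> 0}} \<subseteq> (\<Union>r\<in>{..<R}. \<Union>T\<in>Ts. E r T)"
  proof
    fix M :: "nat \<Rightarrow> nat \<Rightarrow> real" assume "M \<in> {M. \<exists>r<R. K \<le> card {j\<in>{..<m}. M j r \<noteq> 0}}"
    then obtain r where r: "r < R" and K: "K \<le> card {j\<in>{..<m}. M j r \<noteq> 0}" by auto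
    obtain T where "T \<subseteq> {j\<in>{..<m}. M j r \<noteq> 0}" "card T = K"
      using obtain_subset_with_card_n[OF K] by metis
    then show "M \<in> (\<Union>r\<in>{..<R}. \<Union>T\<in>Ts. E r T)" using r by (auto simp: Ts_def E_def)
  qed
  then have "measure_pmf.prob P {M. \<exists>r<R. K \<le> card {j\<in>{..<m}. M j r \<noteq> 0}}
        \<le> measure_pmf.prob P (\<Union>r\<in>{..<R}. \<Union>T\<in>Ts. E r T)"
    by (rule measure_pmf.finite_measure_mono) simp
  also have "\<dots> \<le> (\<Sum>r<R. \<Sum>T\<in>Ts. measure_pmf.prob P (E r T))"
    by (rule order_trans[OF measure_pmf.finite_measure_subadditive_finite sum_mono])
       (auto intro!: measure_pmf.finite_measure_subadditive_finite finTs)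
  also have "\<dots> \<le> (\<Sum>r<R. \<Sum>T\<in>Ts. q ^ K)"
  proof (intro sum_mono)
    fix r T assume r: "r \<in> {..<R}" and T: "T \<in> Ts"
    have "T \<subseteq> {..<n}" and "card T = K" using T mn by (auto simp: Ts_def)
    moreover have "measure_pmf.prob Q {c. c r \<noteq> 0} \<le> q" using hit r by simp
    ultimately show "measure_pmf.prob P (E r T) \<le> q ^ K"
      unfolding P_def E_def using prob_Pi_pmf_all_in_le[of "{..<n}" T Q "{c. c r \<noteq> 0}" q "\<lambda>_. 0"]
      by simp
  qed
  also have "\<dots> = real R * (real (m choose K) * q ^ K)" by (simp add: cardTs)
  finally show ?thesis by (simp add: P_def)
qed

lemma lp_norm_mat_apply_restrict_le:
  fixes M :: "nat \<Rightarrow> nat \<Rightarrow> real" and y :: "nat \<Rightarrow> real"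
  assumes p: "1 \<le> p" and b: "0 \<le> b" and L: "0 \<le> L"
    and col: "\<And>j. j < n \<Longrightarrow> (\<Sum>r<R. \<bar>M j r\<bar> powr p) \<le> b"
    and row: "\<And>r. r < R \<Longrightarrow> real (card {j\<in>{..<m}. M j r \<noteq> 0}) \<le> L"
  shows "lp_norm p R (mat_apply R n M (restrict_first m y)) \<le> L powr (1 - 1/p) * b powr (1/p) * lp_norm p n y"
proof -
  define x where "x = restrict_first m y"
  have "lp_norm p R (mat_apply R n M x) \<le> L powr (1 - 1/p) * b powr (1/p) * lp_norm p n x"
  proof (rule lp_norm_mat_apply_le[OF p b L col])
    fix r assume r: "r < R"
    have "card {j\<in>{..<n}. M j r * x j \<noteq> 0} \<le> card {j\<in>{..<m}. M j r \<noteq> 0}"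
      by (rule card_mono) (auto simp: x_def restrict_first_def split: if_splits)
    then show "real (card {j\<in>{..<n}. M j r * x j \<noteq> 0}) \<le> L"
      using row[OF r] by linarith
  qed simp
  also have "lp_norm p n x \<le> lp_norm p n y"
    unfolding lp_norm_def using p
    by (intro powr_mono2 sum_mono sum_nonneg) (auto simp: x_def restrict_first_def)
  then have "L powr (1 - 1/p) * b powr (1/p) * lp_norm p n x \<le> L powr (1 - 1/p) * b powr (1/p) * lp_norm p n y"
    by (intro mult_left_mono) simp_all
  finally show ?thesis by (simp add: x_def)
qed

lemma prob_lp_norm_sketch_restrict_le:
  fixes Q :: "(nat \<Rightarrow> real) pmf" and y :: "nat \<Rightarrow> real"
  assumes p: "1 \<le> p" and b: "0 \<le> b" and L: "0 < L" and mn: "m \<le> n" and q: "0 \<le> q"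
    and col: "\<And>c. c \<in> set_pmf Q \<Longrightarrow> (\<Sum>r<R. \<bar>c r\<bar> powr p) \<le> b"
    and hit: "\<And>r. r < R \<Longrightarrow> measure_pmf.prob Q {c. c r \<noteq> 0} \<le> q"
    and rows: "real R \<le> exp L" and load: "27 * real m * q \<le> L"
  shows "measure_pmf.prob (Pi_pmf {..<n} (\<lambda>_. 0) (\<lambda>_. Q))
     {M. lp_norm p R (mat_apply R n M (restrict_first m y)) \<le> L powr (1 - 1/p) * b powr (1/p) * lp_norm p n y}
     \<ge> 1 - exp (- L)"
proof -
  define K where "K = nat \<lfloor>L\<rfloor> + 1"
  define P where "P = Pi_pmf {..<n} (\<lambda>_. 0::real) (\<lambda>_. Q)"
  define bad where "bad = {M::nat\<Rightarrow>nat\<Rightarrow>real. \<exists>r<R. K \<le> card {j\<in>{..<m}. M j r \<noteq> 0}}"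
  define good where "good = {M. lp_norm p R (mat_apply R n M (restrict_first m y))
                                  \<le> L powr (1 - 1/p) * b powr (1/p) * lp_norm p n y}"
  have LK: "L \<le> real K" and K1: "K \<ge> 1" using L unfolding K_def by linarith+
  have "measure_pmf.prob P bad \<le> real R * (real (m choose K) * q ^ K)"
    unfolding P_def bad_def by (rule prob_Pi_pmf_row_load_le[OF mn q hit])
  also have "\<dots> \<le> exp (- real K)"
  proof (rule union_binomial_tail_le[OF _ K1 q])
    show "real R \<le> exp (real K)" using rows LK by (meson exp_le_cancel_iff order_trans)
    show "27 * real m * q \<le> real K" using load LK by linarith
  qed
  also have "\<dots> \<le> exp (- L)" using LK by simp
  finally have prob_bad: "measure_pmf.prob P bad \<le> exp (- L)" .
  have "AE M in measure_pmf P. M \<in> - bad \<longrightarrow> M \<in> good"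
  proof (rule AE_pmfI, rule impI)
    fix M assume MP: "M \<in> set_pmf P" and Mb: "M \<in> - bad"
    show "M \<in> good"
      unfolding good_def
    proof (intro CollectI lp_norm_mat_apply_restrict_le[OF p b less_imp_le[OF L]])
      show "(\<Sum>r<R. \<bar>M j r\<bar> powr p) \<le> b" if "j < n" for j
        using MP that col unfolding P_def by (auto simp: set_Pi_pmf PiE_dflt_def)
      show "real (card {j\<in>{..<m}. M j r \<noteq> 0}) \<le> L" if "r < R" for r
      proof -
        have "card {j\<in>{..<m}. M j r \<noteq> 0} < K" using Mb that by (auto simp: bad_def not_le)
        then show ?thesis using L unfolding K_def by linarith
      qed
    qed
  qed
  then have "measure_pmf.prob P (- bad) \<le> measure_pmf.prob P good"
    by (rule measure_pmf.finite_measure_mono_AE) simp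
  moreover have "measure_pmf.prob P (- bad) = 1 - measure_pmf.prob P bad"
    using measure_pmf.prob_compl[of bad P] by (simp add: Compl_eq_Diff_UNIV)
  ultimately show ?thesis using prob_bad unfolding P_def good_def by linarith
qed

lemma countsketch_col_hit_prob:
  assumes r: "r < R"
  shows "measure_pmf.prob (countsketch_col R) {c. c r \<noteq> 0} \<le> 1 / real R"
proof -
  have "measure_pmf.prob (countsketch_col R) {c. c r \<noteq> 0} \<le> measure_pmf.prob (pmf_of_set {..<R}) {r}"
    unfolding countsketch_col_def by (rule measure_bind_pmf_le) (use r in auto)
  also have "\<dots> = 1 / real R"
    using r by (subst measure_pmf_of_set) (auto simp: Int_absorb1)
  finally show ?thesis .
qed

lemma countsketch_col_powr_sum:
  assumes R: "R > 0" and c: "c \<in> set_pmf (countsketch_col R)"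
  shows "(\<Sum>r<R. \<bar>c r\<bar> powr p) = 1"
proof -
  have "\<exists>h\<in>{..<R}. \<exists>\<sigma>\<in>{-1, 1::real}. c = (\<lambda>i. if i = h then \<sigma> else 0)"
  proof -
    have "set_pmf (pmf_of_set {..<R}) = {..<R}" using R by (intro set_pmf_of_set) auto
    then show ?thesis using c by (simp add: countsketch_col_def) blast
  qed
  then obtain h \<sigma> where h: "h < R" and \<sigma>: "\<sigma> \<in> {-1, 1::real}" and c_eq: "c = (\<lambda>i. if i = h then \<sigma> else 0)"
    by blast
  have "(\<Sum>r<R. \<bar>c r\<bar> powr p) = (\<Sum>r<R. if r = h then \<bar>\<sigma>\<bar> powr p else 0)"
    by (rule sum.cong) (auto simp: c_eq)
  also have "\<dots> = 1" using h \<sigma> by auto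
  finally show ?thesis .
qed

lemma card_subsets_containing:
  assumes A: "finite A" and r: "r \<in> A" and s: "1 \<le> s"
  shows "card {S. S \<subseteq> A \<and> card S = s \<and> r \<in> S} = (card A - 1) choose (s - 1)"
proof -
  have "bij_betw (\<lambda>S. S - {r}) {S. S \<subseteq> A \<and> card S = s \<and> r \<in> S} {T. T \<subseteq> A - {r} \<and> card T = s - 1}"
  proof (rule bij_betw_byWitness[where f' = "insert r"])
    show "(\<lambda>S. S - {r}) ` {S. S \<subseteq> A \<and> card S = s \<and> r \<in> S} \<subseteq> {T. T \<subseteq> A - {r} \<and> card T = s - 1}"
      using A by (auto dest: finite_subset)
    show "insert r ` {T. T \<subseteq> A - {r} \<and> card T = s - 1} \<subseteq> {S. S \<subseteq> A \<and> card S = s \<and> r \<in> S}"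
    proof clarify
      fix T assume T: "T \<subseteq> A - {r}" "card T = s - 1"
      then have "finite T" "r \<notin> T" using A finite_subset by auto
      then show "insert r T \<subseteq> A \<and> card (insert r T) = s \<and> r \<in> insert r T"
        using T r s by auto
    qed
  qed auto
  then have "card {S. S \<subseteq> A \<and> card S = s \<and> r \<in> S} = card {T. T \<subseteq> A - {r} \<and> card T = s - 1}"
    by (rule bij_betw_same_card)
  also have "\<dots> = (card A - 1) choose (s - 1)"
    using A r by (simp add: n_subsets)
  finally show ?thesis .
qed

lemma osnap_col_hit_prob:
  assumes r: "r < R" and s: "1 \<le> s"
  shows "measure_pmf.prob (osnap_col R s) {c. c r \<noteq> 0} \<le> real s / real R"
proof (cases "s \<le> R")
  case sR: True
  define Ss where "Ss = {S. S \<subseteq> {..<R} \<and> card S = s}"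
  have finSs: "finite Ss" unfolding Ss_def by (rule finite_subset[of _ "Pow {..<R}"]) auto
  have cardSs: "card Ss = R choose s" unfolding Ss_def using n_subsets[of "{..<R}" s] by simp
  have pos: "R choose s > 0" using sR by simp
  have "measure_pmf.prob (osnap_col R s) {c. c r \<noteq> 0} \<le> measure_pmf.prob (pmf_of_set Ss) {S. r \<in> S}"
    unfolding osnap_col_def Ss_def[symmetric] by (rule measure_bind_pmf_le) auto
  also have "\<dots> = real ((R - 1) choose (s - 1)) / real (R choose s)"
  proof -
    have "Ss \<inter> {S. r \<in> S} = {S. S \<subseteq> {..<R} \<and> card S = s \<and> r \<in> S}" by (auto simp: Ss_def)
    then show ?thesis
      using finSs pos cardSs card_subsets_containing[of "{..<R}" r s] r s
      by (subst measure_pmf_of_set) auto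
  qed
  also have "\<dots> = real s / real R"
  proof -
    have "s * (R choose s) = R * ((R - 1) choose (s - 1))"
      using Suc_times_binomial[of "s - 1" "R - 1"] r s by simp
    then have "real s * real (R choose s) = real R * real ((R - 1) choose (s - 1))"
      by (metis of_nat_mult)
    then show ?thesis using pos r by (simp add: field_simps)
  qed
  finally show ?thesis .
next
  case False
  then have "1 \<le> real s / real R" using r by simp
  then show ?thesis using measure_pmf.prob_le_1 order_trans by blast
qed

lemma osnap_col_powr_sum:
  assumes s: "1 \<le> s" and c: "c \<in> set_pmf (osnap_col R s)" and sR: "s \<le> R"
  shows "(\<Sum>r<R. \<bar>c r\<bar> powr p) = real s powr (1 - p/2)"
proof -
  define Ss where "Ss = {S. S \<subseteq> {..<R} \<and> card S = s}"
  have finSs: "finite Ss" unfolding Ss_def by (rule finite_subset[of _ "Pow {..<R}"]) auto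
  have "card Ss = R choose s" unfolding Ss_def using n_subsets[of "{..<R}" s] by simp
  then have neSs: "Ss \<noteq> {}" using sR by auto
  obtain S \<sigma> where S: "S \<in> Ss" and \<sigma>: "\<sigma> \<in> set_pmf (Pi_pmf S 0 (\<lambda>_. pmf_of_set {-1, 1::real}))"
      and c_eq: "c = (\<lambda>i. if i \<in> S then \<sigma> i / sqrt (real s) else 0)"
    using c finSs neSs unfolding osnap_col_def Ss_def[symmetric] by auto
  have SR: "S \<subseteq> {..<R}" and cS: "card S = s" using S by (auto simp: Ss_def)
  have finS: "finite S" using SR finite_subset by blast
  have \<sigma>S: "\<sigma> i \<in> {-1, 1}" if "i \<in> S" for i
    using \<sigma> that finS by (auto simp: set_Pi_pmf PiE_dflt_def)
  have "(\<Sum>r<R. \<bar>c r\<bar> powr p) = (\<Sum>r\<in>S. \<bar>c r\<bar> powr p)"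
    by (rule sum.mono_neutral_right) (use SR in \<open>auto simp: c_eq\<close>)
  also have "\<dots> = (\<Sum>r\<in>S. real s powr (- p/2))"
  proof (rule sum.cong)
    fix r assume "r \<in> S"
    then have "\<bar>\<sigma> r\<bar> = 1" using \<sigma>S[of r] by auto
    then have "\<bar>c r\<bar> = 1 / sqrt (real s)" using \<open>r \<in> S\<close> by (simp add: c_eq)
    also have "1 / sqrt (real s) = real s powr (-(1/2))"
      using s by (simp add: powr_minus_divide powr_half_sqrt)
    finally show "\<bar>c r\<bar> powr p = real s powr (- p/2)" by (simp add: powr_powr)
  qed simp
  also have "\<dots> = real s powr 1 * real s powr (- p/2)" using cS s by simp
  also have "\<dots> = real s powr (1 + - p/2)" by (rule powr_add[symmetric])
  finally show ?thesis by simp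
qed

lemma real_nat_ceiling_le:
  fixes x :: real
  assumes "0 \<le> x"
  shows "real (nat \<lceil>x\<rceil>) \<le> x + 1"
  using assms ceiling_correct[of x] by linarith

lemma ln_gt_half:
  fixes x :: real
  assumes "2 \<le> x"
  shows "1/2 < ln x"
  using ln2_ge_two_thirds ln_le_cancel_iff[of 2 x] assms by linarith

lemma exp_sketch_rate_ge:
  fixes C0 \<omega> :: real and d :: nat
  assumes C0: "C0 > 0" and d: "2 \<le> d" and \<omega>: "2 * C0 + 3 \<le> \<omega>"
  shows "\<omega> \<le> \<omega> * d * ln d" and "(C0 + 1) * real d ^ 3 \<le> exp (\<omega> * d * ln d)"
proof -
  have D: "2 \<le> real d" using d by simp
  have lnd: "1/2 < ln d" using ln_gt_half D by simp
  have "1 \<le> real d * ln d" using mult_mono[OF D less_imp_le[OF lnd]] by simp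
  then show \<omega>L: "\<omega> \<le> \<omega> * d * ln d"
    using \<omega> C0 mult_left_mono[of 1 "real d * ln d" \<omega>] by (simp add: mult.assoc)
  have "ln ((C0 + 1) * real d ^ 3) = ln (C0 + 1) + 3 * ln d"
    using C0 D by (simp add: ln_mult ln_realpow)
  also have "\<dots> \<le> C0 * (2 * ln d) + 3 * ln d"
  proof -
    have "C0 * 1 \<le> C0 * (2 * ln d)" using C0 lnd by (intro mult_left_mono) auto
    moreover have "ln (C0 + 1) \<le> C0" using C0 ln_le_minus_one[of "C0 + 1"] by simp
    ultimately show ?thesis by linarith
  qed
  also have "\<dots> = (2 * C0 + 3) * ln d" by (simp add: algebra_simps)
  also have "\<dots> \<le> \<omega> * ln d" using \<omega> lnd by (intro mult_right_mono) auto
  also have "\<dots> \<le> \<omega> * d * ln d"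
    using \<omega> C0 lnd D mult_left_mono[of 1 "real d" "\<omega> * ln d"] by (simp add: algebra_simps)
  finally have "ln ((C0 + 1) * real d ^ 3) \<le> \<omega> * d * ln d" .
  moreover have "0 < (C0 + 1) * real d ^ 3" using C0 D by simp
  ultimately show "(C0 + 1) * real d ^ 3 \<le> exp (\<omega> * d * ln d)"
    by (metis exp_le_cancel_iff exp_ln)
qed

lemma countsketch_restrict_lp_norm:
  fixes p C0 \<omega> :: real and d n R :: nat and y :: "nat \<Rightarrow> real"
  assumes p: "1 \<le> p" and C0: "C0 > 0" and d: "2 \<le> d" and n: "d^2 \<le> n"
    and \<omega>: "2 * C0 + 3 \<le> \<omega>" "27 / C0 \<le> \<omega>" and R: "R = nat \<lceil>C0 * real d ^ 2\<rceil>"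
  shows "measure_pmf.prob (countsketch R n)
           {M. lp_norm p R (mat_apply R n M (restrict_first (d^2) y))
                 \<le> (\<omega> * d * ln d) powr (1 - 1/p) * lp_norm p n y}
         \<ge> 1 - exp (- (\<omega> * d * ln d))"
proof -
  define L where "L = \<omega> * d * ln d"
  have \<omega>L: "\<omega> \<le> L" and expL: "(C0 + 1) * real d ^ 3 \<le> exp L"
    using exp_sketch_rate_ge[OF C0 d \<omega>(1)] by (simp_all add: L_def)
  have D: "2 \<le> real d" using d by simp
  have R_ge: "C0 * real d ^ 2 \<le> real R" unfolding R using real_nat_ceiling_ge .
  have "0 < C0 * real d ^ 2" using C0 D by simp
  then have R_pos: "0 < real R" using R_ge by linarith
  have "real R \<le> C0 * real d ^ 2 + 1" unfolding R using C0 by (intro real_nat_ceiling_le) simp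
  also have "\<dots> \<le> C0 * real d ^ 3 + real d ^ 3"
    using C0 D power_increasing[of 2 3 "real d"] one_le_power[of "real d" 3]
    by (intro add_mono mult_left_mono) auto
  also have "\<dots> = (C0 + 1) * real d ^ 3" by (simp add: algebra_simps)
  finally have rows: "real R \<le> exp L" using expL by linarith
  have "27 * real (d^2) * (1 / real R) \<le> 27 / C0"
    using R_ge C0 R_pos by (simp add: field_simps)
  then have load: "27 * real (d^2) * (1 / real R) \<le> L" using \<omega>(2) \<omega>L by linarith
  have "measure_pmf.prob (Pi_pmf {..<n} (\<lambda>_. 0) (\<lambda>_. countsketch_col R))
     {M. lp_norm p R (mat_apply R n M (restrict_first (d^2) y)) \<le> L powr (1 - 1/p) * 1 powr (1/p) * lp_norm p n y}
     \<ge> 1 - exp (- L)"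
    using C0 \<omega> \<omega>L R_pos countsketch_col_powr_sum countsketch_col_hit_prob
    by (intro prob_lp_norm_sketch_restrict_le[OF p _ _ n _ _ _ rows load]) auto
  then show ?thesis by (simp add: countsketch_def L_def)
qed

lemma osnap_sparsity_le:
  fixes C1 B x :: real
  assumes C1: "C1 > 0" and B: "2 < B" "B \<le> x"
  shows "1 \<le> nat \<lceil>C1 * log B x\<rceil>" and "real (nat \<lceil>C1 * log B x\<rceil>) \<le> 2 * (C1 + 1) * ln x"
proof -
  have lnB: "1/2 < ln B" using ln_gt_half B by simp
  have lnx: "1/2 < ln x" using ln_gt_half B by simp
  have "ln B \<le> ln x" using B by simp
  then have "1 \<le> log B x" using lnB by (simp add: log_def)
  then have pos: "0 < C1 * log B x" using C1 by simp
  then show "1 \<le> nat \<lceil>C1 * log B x\<rceil>" by linarith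
  have "log B x \<le> 2 * ln x"
    using lnB lnx by (simp add: log_def divide_le_eq)
  then have "C1 * log B x \<le> C1 * (2 * ln x)" using C1 by (intro mult_left_mono) auto
  then have "C1 * log B x + 1 \<le> 2 * C1 * ln x + 2 * ln x" using lnx by simp
  then show "real (nat \<lceil>C1 * log B x\<rceil>) \<le> 2 * (C1 + 1) * ln x"
    using real_nat_ceiling_le[OF less_imp_le[OF pos]] by (simp add: algebra_simps)
qed

lemma osnap_rows_load_le:
  fixes C0 C1 \<omega> B :: real and d R s :: nat
  assumes C0: "C0 > 0" and C1: "C1 > 0" and d: "2 \<le> d"
    and \<omega>: "2 * C0 + 3 \<le> \<omega>" "54 * (C1 + 1) / C0 \<le> \<omega>" and B: "2 < B" "B \<le> real d"
    and R: "R = nat \<lceil>C0 * B * d * ln d\<rceil>" and s: "s = nat \<lceil>C1 * log B d\<rceil>"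
  shows "real R \<le> exp (\<omega> * d * ln d)" and "27 * real (d^2) * (real s / real R) \<le> \<omega> * d * ln d"
proof -
  define D where "D = real d"
  define L where "L = \<omega> * D * ln D"
  have D: "2 \<le> D" using d by (simp add: D_def)
  have lnD: "1/2 < ln D" using ln_gt_half D by simp
  have expL: "(C0 + 1) * D ^ 3 \<le> exp L"
    using exp_sketch_rate_ge[OF C0 d \<omega>(1)] by (simp add: L_def D_def)
  have s_le: "real s \<le> 2 * (C1 + 1) * ln D"
    using osnap_sparsity_le[OF C1 B] by (simp add: s D_def)
  define a where "a = C0 * B * D * ln D"
  have a: "0 < a" using C0 B D lnD by (simp add: a_def)
  have R_ge: "a \<le> real R" using real_nat_ceiling_ge by (simp add: R a_def D_def)
  have R_le: "real R \<le> a + 1" using real_nat_ceiling_le a by (simp add: R a_def D_def)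
  have "a \<le> C0 * D ^ 3"
  proof -
    have "B * (D * ln D) \<le> D * (D * D)"
      using B D lnD ln_le_minus_one[of D] by (intro mult_mono) (auto simp: D_def)
    then show ?thesis using C0 by (simp add: a_def power3_eq_cube mult.assoc)
  qed
  moreover have "1 \<le> D ^ 3" using D by simp
  ultimately show "real R \<le> exp (\<omega> * d * ln d)"
    using R_le expL by (simp add: algebra_simps L_def D_def)
  have "real s / real R \<le> 2 * (C1 + 1) * ln D / a"
    using s_le R_ge a by (intro frac_le) auto
  then have "27 * D^2 * (real s / real R) \<le> 27 * D^2 * (2 * (C1 + 1) * ln D / a)"
    by (rule mult_left_mono) simp
  also have "\<dots> = 54 * (C1 + 1) / C0 * D / B"
    using C0 B D lnD by (simp add: a_def field_simps power2_eq_square)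
  also have "\<dots> \<le> 54 * (C1 + 1) / C0 * D / 2"
    using B D C0 C1 by (intro divide_left_mono) auto
  also have "\<dots> \<le> \<omega> * D / 2"
    using \<omega>(2) D by (intro divide_right_mono mult_right_mono) auto
  also have "\<dots> \<le> \<omega> * D * ln D"
    using \<omega> C0 lnD D mult_left_mono[of "1/2" "ln D" "\<omega> * D"] by simp
  finally show "27 * real (d^2) * (real s / real R) \<le> \<omega> * d * ln d" by (simp add: D_def)
qed

lemma osnap_restrict_lp_norm:
  fixes p C0 C1 \<omega> B :: real and d n R s :: nat and y :: "nat \<Rightarrow> real"
  assumes p: "1 \<le> p" and C0: "C0 > 0" and C1: "C1 > 0" and d: "2 \<le> d" and n: "d^2 \<le> n"
    and \<omega>: "2 * C0 + 3 \<le> \<omega>" "54 * (C1 + 1) / C0 \<le> \<omega>" and B: "2 < B" "B \<le> real d"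
    and R: "R = nat \<lceil>C0 * B * d * ln d\<rceil>" and s: "s = nat \<lceil>C1 * log B d\<rceil>" and sR: "s \<le> R"
  shows "measure_pmf.prob (osnap R s n)
           {M. lp_norm p R (mat_apply R n M (restrict_first (d^2) y))
                 \<le> real s powr (1/p - 1/2) * (\<omega> * d * ln d) powr (1 - 1/p) * lp_norm p n y}
         \<ge> 1 - exp (- (\<omega> * d * ln d))"
proof -
  define L where "L = \<omega> * d * ln d"
  have L: "0 < L" using exp_sketch_rate_ge(1)[OF C0 d \<omega>(1)] C0 \<omega>(1) unfolding L_def by linarith
  have s1: "1 \<le> s" using osnap_sparsity_le(1)[OF C1 B] by (simp add: s)
  note rows_load = osnap_rows_load_le[OF C0 C1 d \<omega> B R s, folded L_def]
  have "measure_pmf.prob (Pi_pmf {..<n} (\<lambda>_. 0) (\<lambda>_. osnap_col R s))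
     {M. lp_norm p R (mat_apply R n M (restrict_first (d^2) y))
           \<le> L powr (1 - 1/p) * (real s powr (1 - p/2)) powr (1/p) * lp_norm p n y}
     \<ge> 1 - exp (- L)"
    using s1 sR osnap_col_powr_sum osnap_col_hit_prob
    by (intro prob_lp_norm_sketch_restrict_le[OF p _ L n _ _ _ rows_load]) auto
  moreover have "(real s powr (1 - p/2)) powr (1/p) = real s powr (1/p - 1/2)"
    using p by (simp add: powr_powr field_simps)
  ultimately show ?thesis by (simp add: osnap_def L_def mult_ac)
qed

theorem mainTheorem15:
  fixes p C0 C1 :: real
  assumes "1 \<le> p" and "p < 2" and "C0 > 0" and "C1 > 0"
  shows "\<exists>\<omega>0 c :: real. c > 0 \<and>
    (\<forall>(d::nat) (n::nat) (\<omega>::real) (y::nat \<Rightarrow> real).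
       d \<ge> 2 \<longrightarrow> n \<ge> d^2 \<longrightarrow> \<omega> \<ge> \<omega>0 \<longrightarrow>
       (let R = nat \<lceil>C0 * real d ^ 2\<rceil> in
          measure_pmf.prob (countsketch R n)
            {M. lp_norm p R (mat_apply R n M (restrict_first (d^2) y))
                  \<le> (\<omega> * d * ln d) powr (1 - 1/p) * lp_norm p n y}
          \<ge> 1 - exp (- c * \<omega> * d * ln d))
       \<and>
       (\<forall>B::real. 2 < B \<longrightarrow> B \<le> real d \<longrightarrow>
          (let R = nat \<lceil>C0 * B * d * ln d\<rceil>; s = nat \<lceil>C1 * log B d\<rceil> in
             s \<le> R \<longrightarrow>
             measure_pmf.prob (osnap R s n)
               {M. lp_norm p R (mat_apply R n M (restrict_first (d^2) y))
                     \<le> real s powr (1/p - 1/2) * (\<omega> * d * ln d) powr (1 - 1/p) * lp_norm p n y}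
             \<ge> 1 - exp (- c * \<omega> * d * ln d))))"
proof -
  define \<omega>0 where "\<omega>0 = 2 * C0 + 3 + 54 * (C1 + 1) / C0"
  have "27 / C0 \<le> 54 * (C1 + 1) / C0" and "0 \<le> 54 * (C1 + 1) / C0"
    using assms by (simp_all add: divide_right_mono)
  then have \<omega>0: "2 * C0 + 3 \<le> \<omega>" "27 / C0 \<le> \<omega>" "54 * (C1 + 1) / C0 \<le> \<omega>" if "\<omega>0 \<le> \<omega>" for \<omega>
    using that assms unfolding \<omega>0_def by linarith+
  show ?thesis
    using countsketch_restrict_lp_norm[OF assms(1,3)] osnap_restrict_lp_norm[OF assms(1,3,4)] \<omega>0
    by (intro exI[of _ \<omega>0] exI[of _ 1]) (auto simp: Let_def)
qed

end
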